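(* Let $X$ be a topological space, $Y$ a $T_1$ topological space, $\pi: X \to Y$ a continuous surjection, and $y \in Y$. Let $Y^y$ be the quotient space of $X$ obtained by identifying each fiber $\pi^{-1}(y')$ with $y' \neq y$ to a single point while leaving every point of $\pi^{-1}(y)$ as its own class, let $p^y: X \to Y^y$ be the quotient map, and let $\pi^y: Y^y \to Y$ be the unique map with $\pi = \pi^y \circ p^y$. Then the restriction $p^y|_{\pi^{-1}(y)}: \pi^{-1}(y) \to (\pi^y)^{-1}(y)$ is a homeomorphism (with the subspace topologies from $X$ and $Y^y$ respectively). *)

theory Defs
  imports "HOL-Analysis.Analysis"
begin

lemma istopology_quotient:
  "istopology (\<lambda>U. U \<subseteq> p ` topspace X \<and> openin X {x \<in> topspace X. p x \<in> U})"
proof -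
  have 1: "openin X {x \<in> topspace X. p x \<in> S \<inter> T}"
    if "openin X {x \<in> topspace X. p x \<in> S}" "openin X {x \<in> topspace X. p x \<in> T}" for S T
  proof -
    have "{x \<in> topspace X. p x \<in> S \<inter> T} =
          {x \<in> topspace X. p x \<in> S} \<inter> {x \<in> topspace X. p x \<in> T}" by auto
    then show ?thesis using that by auto
  qed
  have 2: "openin X {x \<in> topspace X. p x \<in> \<Union>K}"
    if "\<forall>U\<in>K. openin X {x \<in> topspace X. p x \<in> U}" for K
  proof -
    have "{x \<in> topspace X. p x \<in> \<Union>K} = (\<Union>U\<in>K. {x \<in> topspace X. p x \<in> U})" by auto
    then show ?thesis using that by auto
  qed
  show ?thesis unfolding istopology_def using 1 2 by blast
qed

definition quotient_topology :: "'a topology \<Rightarrow> ('a \<Rightarrow> 'b) \<Rightarrow> 'b topology" where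
  "quotient_topology X p =
     topology (\<lambda>U. U \<subseteq> p ` topspace X \<and> openin X {x \<in> topspace X. p x \<in> U})"

definition fiber_collapse :: "'a topology \<Rightarrow> ('a \<Rightarrow> 'b) \<Rightarrow> 'b \<Rightarrow> 'a \<Rightarrow> 'a set" where
  "fiber_collapse X \<pi> y x =
     (if \<pi> x = y then {x} else {x' \<in> topspace X. \<pi> x' = \<pi> x})"

end

theory Submission
  imports Defs
begin

text \<open>The fiber \<open>F = \<pi>\<^sup>-\<^sup>1(y)\<close> is closed because \<open>Y\<close> is \<open>T\<^sub>1\<close>, and it is saturated for the
  quotient map \<open>p\<^sup>y\<close>, on which \<open>p\<^sup>y\<close> is injective. A quotient map restricts to a quotient map
  on a closed saturated set, and an injective quotient map is a homeomorphism.
  The set \<open>(\<pi>\<^sup>y)\<^sup>-\<^sup>1(y)\<close> is exactly \<open>p\<^sup>y(F)\<close>, since \<open>\<pi> = \<pi>\<^sup>y \<circ> p\<^sup>y\<close>.\<close>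

lemma openin_quotient_topology:
  "openin (quotient_topology X p) U \<longleftrightarrow>
     U \<subseteq> p ` topspace X \<and> openin X {x \<in> topspace X. p x \<in> U}"
  unfolding quotient_topology_def using istopology_quotient[of p X] by simp

lemma topspace_quotient_topology: "topspace (quotient_topology X p) = p ` topspace X"
proof
  show "topspace (quotient_topology X p) \<subseteq> p ` topspace X"
    using openin_quotient_topology[of X p "topspace (quotient_topology X p)"] by simp
  have "{x \<in> topspace X. p x \<in> p ` topspace X} = topspace X"
    by auto
  then have "openin (quotient_topology X p) (p ` topspace X)"
    by (simp add: openin_quotient_topology)
  then show "p ` topspace X \<subseteq> topspace (quotient_topology X p)"
    by (rule openin_subset)
qed

lemma quotient_map_quotient_topology: "quotient_map X (quotient_topology X p) p"
  unfolding quotient_map_def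
  by (auto simp: topspace_quotient_topology openin_quotient_topology)

lemma quotient_topology_preimage_eq_image:
  assumes "\<forall>x \<in> topspace X. g (p x) = \<pi> x"
  shows "{c \<in> topspace (quotient_topology X p). g c = y} = p ` {x \<in> topspace X. \<pi> x = y}"
  using assms unfolding topspace_quotient_topology by force

lemma homeomorphic_map_saturated_restriction:
  assumes quo: "quotient_map X Y f" and S: "openin X S \<or> closedin X S"
    and sat: "{x \<in> topspace X. f x \<in> f ` S} = S" and inj: "inj_on f S"
  shows "homeomorphic_map (subtopology X S) (subtopology Y (f ` S)) f"
proof -
  have "S \<subseteq> topspace X"
    using S openin_subset closedin_subset by blast
  then have fS: "f ` S \<subseteq> topspace Y"
    using quotient_imp_surjective_map[OF quo] by blast
  have "openin X S \<longleftrightarrow> openin Y (f ` S)"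
    using quo fS sat unfolding quotient_map_def by metis
  moreover have "closedin X S \<longleftrightarrow> closedin Y (f ` S)"
    using quo fS sat unfolding quotient_map_closedin by metis
  ultimately have "openin Y (f ` S) \<or> closedin Y (f ` S)"
    using S by blast
  then have "quotient_map (subtopology X S) (subtopology Y (f ` S)) f"
    using quotient_map_restriction[OF quo sat] by blast
  then show ?thesis
    using inj \<open>S \<subseteq> topspace X\<close> by (simp add: homeomorphic_map_def Int_absorb1)
qed

lemma fiber_collapse_on_fiber: "\<pi> x = y \<Longrightarrow> fiber_collapse X \<pi> y x = {x}"
  by (simp add: fiber_collapse_def)

lemma mem_fiber_collapse: "x \<in> topspace X \<Longrightarrow> x \<in> fiber_collapse X \<pi> y x"
  by (simp add: fiber_collapse_def)

lemma fiber_collapse_eq_fiber_point: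
  assumes "x \<in> topspace X" and "\<pi> z = y"
    and "fiber_collapse X \<pi> y x = fiber_collapse X \<pi> y z"
  shows "x = z"
proof -
  have "x \<in> fiber_collapse X \<pi> y z"
    using assms(3) mem_fiber_collapse[OF assms(1)] by metis
  then show ?thesis
    using assms(2) by (simp add: fiber_collapse_on_fiber)
qed

lemma fiber_collapse_saturated_fiber:
  "{x \<in> topspace X. fiber_collapse X \<pi> y x \<in> fiber_collapse X \<pi> y ` {z \<in> topspace X. \<pi> z = y}}
     = {z \<in> topspace X. \<pi> z = y}"
  using fiber_collapse_eq_fiber_point[of _ X \<pi>] by auto

lemma inj_on_fiber_collapse_fiber: "inj_on (fiber_collapse X \<pi> y) {x \<in> topspace X. \<pi> x = y}"
  by (simp add: inj_on_def fiber_collapse_on_fiber)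

lemma closedin_fiber_t1:
  assumes "t1_space Y" and "continuous_map X Y \<pi>"
  shows "closedin X {x \<in> topspace X. \<pi> x = y}"
proof (cases "y \<in> topspace Y")
  case True
  then have "closedin X {x \<in> topspace X. \<pi> x \<in> {y}}"
    using closedin_continuous_map_preimage[OF assms(2)] closedin_t1_singleton[OF assms(1)]
    by blast
  then show ?thesis by simp
next
  case False
  then have "{x \<in> topspace X. \<pi> x = y} = {}"
    using assms(2) by (auto simp: continuous_map_def)
  then show ?thesis by (metis closedin_empty)
qed

theorem proposition4p1:
  fixes X :: "'a topology" and Y :: "'b topology" and \<pi> :: "'a \<Rightarrow> 'b" and y :: 'b
    and \<pi>y :: "'a set \<Rightarrow> 'b"
  assumes "t1_space Y"
    and "continuous_map X Y \<pi>"
    and "\<pi> ` topspace X = topspace Y"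
    and "y \<in> topspace Y"
    and "\<forall>x \<in> topspace X. \<pi>y (fiber_collapse X \<pi> y x) = \<pi> x"
  shows "homeomorphic_map
           (subtopology X {x \<in> topspace X. \<pi> x = y})
           (subtopology (quotient_topology X (fiber_collapse X \<pi> y))
              {c \<in> topspace (quotient_topology X (fiber_collapse X \<pi> y)). \<pi>y c = y})
           (fiber_collapse X \<pi> y)"
proof -
  have "closedin X {x \<in> topspace X. \<pi> x = y}"
    using closedin_fiber_t1[OF assms(1,2)] .
  then have "homeomorphic_map (subtopology X {x \<in> topspace X. \<pi> x = y})
          (subtopology (quotient_topology X (fiber_collapse X \<pi> y))
             (fiber_collapse X \<pi> y ` {x \<in> topspace X. \<pi> x = y}))
          (fiber_collapse X \<pi> y)"
    by (intro homeomorphic_map_saturated_restriction quotient_map_quotient_topology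
        fiber_collapse_saturated_fiber inj_on_fiber_collapse_fiber disjI2)
  then show ?thesis
    using quotient_topology_preimage_eq_image[where p = "fiber_collapse X \<pi> y", OF assms(5)]
    by (simp only:)
qed

end
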